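(* The algebra $\mathcal O_q$ defined in the context is generated by $\mathcal W_0$, $\mathcal W_1$, $\{\tilde{\mathcal G}_{k+1}\}_{k\in\mathbb N}$.
   Context: All algebras are associative and unital over a field $\mathbb F$; $q\in\mathbb F$ is nonzero and not a root of unity. For elements $X,Y$ of an algebra, $[X,Y]=XY-YX$ and $[X,Y]_q=qXY-q^{-1}YX$. Let $\rho=-(q^2-q^{-2})^2$. The algebra $\mathcal O_q$ is defined by generators $\mathcal W_{-k},\mathcal W_{k+1},\mathcal G_{k+1},\tilde{\mathcal G}_{k+1}$ ($k\in\mathbb N$) and the following relations for all $k,\ell\in\mathbb N$: $[\mathcal W_0,\mathcal W_{k+1}]=[\mathcal W_{-k},\mathcal W_1]=(\tilde{\mathcal G}_{k+1}-\mathcal G_{k+1})/(q+q^{-1})$; $[\mathcal W_0,\mathcal G_{k+1}]_q=[\tilde{\mathcal G}_{k+1},\mathcal W_0]_q=\rho\mathcal W_{-k-1}-\rho\mathcal W_{k+1}$; $[\mathcal G_{k+1},\mathcal W_1]_q=[\mathcal W_1,\tilde{\mathcal G}_{k+1}]_q=\rho\mathcal W_{k+2}-\rho\mathcal W_{-k}$; $[\mathcal W_{-k},\mathcal W_{-\ell}]=0$, $[\mathcal W_{k+1},\mathcal W_{\ell+1}]=0$; $[\mathcal W_{-k},\mathcal W_{\ell+1}]+[\mathcal W_{k+1},\mathcal W_{-\ell}]=0$; $[\mathcal W_{-k},\mathcal G_{\ell+1}]+[\mathcal G_{k+1},\mathcal W_{-\ell}]=0$; $[\mathcal W_{-k},\tilde{\mathcal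 G}_{\ell+1}]+[\tilde{\mathcal G}_{k+1},\mathcal W_{-\ell}]=0$; $[\mathcal W_{k+1},\mathcal G_{\ell+1}]+[\mathcal G_{k+1},\mathcal W_{\ell+1}]=0$; $[\mathcal W_{k+1},\tilde{\mathcal G}_{\ell+1}]+[\tilde{\mathcal G}_{k+1},\mathcal W_{\ell+1}]=0$; $[\mathcal G_{k+1},\mathcal G_{\ell+1}]=0$, $[\tilde{\mathcal G}_{k+1},\tilde{\mathcal G}_{\ell+1}]=0$; $[\tilde{\mathcal G}_{k+1},\mathcal G_{\ell+1}]+[\mathcal G_{k+1},\tilde{\mathcal G}_{\ell+1}]=0$. *)

theory Defs
  imports Main
begin

text \<open>An associative unital algebra over a field F is modelled as a ring 'a :: ring_1
  together with a unital ring homomorphism e : F -> 'a whose image is central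
  (the structure map); scalar multiplication c . x is e c * x.\<close>

definition alg_struct :: "('f::field \<Rightarrow> 'a::ring_1) \<Rightarrow> bool" where
  "alg_struct e \<longleftrightarrow> e 1 = 1 \<and> (\<forall>a b. e (a + b) = e a + e b) \<and>
     (\<forall>a b. e (a * b) = e a * e b) \<and> (\<forall>a x. e a * x = x * e a)"

definition comm :: "'a::ring \<Rightarrow> 'a \<Rightarrow> 'a" where
  "comm x y = x * y - y * x"

definition qcomm :: "('f::field \<Rightarrow> 'a::ring_1) \<Rightarrow> 'f \<Rightarrow> 'a \<Rightarrow> 'a \<Rightarrow> 'a" where
  "qcomm e q x y = e q * x * y - e (inverse q) * y * x"

definition rho :: "'f::field \<Rightarrow> 'f" where
  "rho q = - ((q^2 - inverse (q^2))^2)"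

definition not_root_of_unity :: "'f::field \<Rightarrow> bool" where
  "not_root_of_unity q \<longleftrightarrow> (\<forall>n::nat. n > 0 \<longrightarrow> q ^ n \<noteq> 1)"

text \<open>Subalgebra generated by S: smallest subset containing S and the scalars,
  closed under addition and multiplication (closure under scalar multiplication
  and negation follows since scalars e c belong to it).\<close>

inductive_set subalg :: "('f::field \<Rightarrow> 'a::ring_1) \<Rightarrow> 'a set \<Rightarrow> 'a set"
  for e :: "'f \<Rightarrow> 'a" and S :: "'a set" where
  gen: "x \<in> S \<Longrightarrow> x \<in> subalg e S"
| scal: "e c \<in> subalg e S"
| add: "x \<in> subalg e S \<Longrightarrow> y \<in> subalg e S \<Longrightarrow> x + y \<in> subalg e S"
| mult: "x \<in> subalg e S \<Longrightarrow> y \<in> subalg e S \<Longrightarrow> x * y \<in> subalg e S"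

text \<open>Defining relations of O_q. Indexing: Wm k = W_{-k}, Wp k = W_{k+1},
  G k = G_{k+1}, Gt k = tilde G_{k+1}. Hence W_0 = Wm 0, W_1 = Wp 0.\<close>

definition Oq_rels :: "('f::field \<Rightarrow> 'a::ring_1) \<Rightarrow> 'f \<Rightarrow> (nat \<Rightarrow> 'a) \<Rightarrow> (nat \<Rightarrow> 'a)
    \<Rightarrow> (nat \<Rightarrow> 'a) \<Rightarrow> (nat \<Rightarrow> 'a) \<Rightarrow> bool" where
  "Oq_rels e q Wm Wp G Gt \<longleftrightarrow>
    (\<forall>k l.
      comm (Wm 0) (Wp k) = e (inverse (q + inverse q)) * (Gt k - G k) \<and>
      comm (Wm k) (Wp 0) = e (inverse (q + inverse q)) * (Gt k - G k) \<and>
      qcomm e q (Wm 0) (G k) = e (rho q) * Wm (Suc k) - e (rho q) * Wp k \<and>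
      qcomm e q (Gt k) (Wm 0) = e (rho q) * Wm (Suc k) - e (rho q) * Wp k \<and>
      qcomm e q (G k) (Wp 0) = e (rho q) * Wp (Suc k) - e (rho q) * Wm k \<and>
      qcomm e q (Wp 0) (Gt k) = e (rho q) * Wp (Suc k) - e (rho q) * Wm k \<and>
      comm (Wm k) (Wm l) = 0 \<and> comm (Wp k) (Wp l) = 0 \<and>
      comm (Wm k) (Wp l) + comm (Wp k) (Wm l) = 0 \<and>
      comm (Wm k) (G l) + comm (G k) (Wm l) = 0 \<and>
      comm (Wm k) (Gt l) + comm (Gt k) (Wm l) = 0 \<and>
      comm (Wp k) (G l) + comm (G k) (Wp l) = 0 \<and>
      comm (Wp k) (Gt l) + comm (Gt k) (Wp l) = 0 \<and>
      comm (G k) (G l) = 0 \<and> comm (Gt k) (Gt l) = 0 \<and>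
      comm (Gt k) (G l) + comm (G k) (Gt l) = 0)"

end

theory Submission
  imports Defs
begin

text \<open>Since q is not a root of unity, rho and q + 1/q are nonzero, so the defining
  relations can be solved for the other generators. The q-commutators of tilde G(k+1)
  with W(0) and W(1) express W(-k-1) and W(k+2) through W(k+1), W(-k) and the generators,
  so induction on k gives every W; then [W(0), W(k+1)] = (tilde G(k+1) - G(k+1))/(q + 1/q)
  gives G(k+1).\<close>

lemma alg_struct_zero:
  assumes "alg_struct e"
  shows "e 0 = 0"
proof -
  have "e (0 + 0) = e 0 + e 0"
    using assms unfolding alg_struct_def by blast
  then show ?thesis by simp
qed

lemma alg_struct_minus_one:
  assumes "alg_struct e"
  shows "e (-1) = -1"
proof -
  have "e (-1 + 1) = e (-1) + e 1" and "e 1 = 1"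
    using assms unfolding alg_struct_def by blast+
  then have "e (-1) + 1 = 0"
    using alg_struct_zero[OF assms] by simp
  then show ?thesis by (simp add: eq_neg_iff_add_eq_0)
qed

lemma alg_struct_inverse_cancel:
  assumes "alg_struct e" and "c \<noteq> 0"
  shows "e (inverse c) * (e c * x) = x"
proof -
  have "e (inverse c) * e c = e (inverse c * c)" and "e 1 = 1"
    using assms(1) unfolding alg_struct_def by metis+
  then have "e (inverse c) * e c = 1"
    using assms(2) by simp
  then show ?thesis
    by (simp flip: mult.assoc)
qed

lemma subalg_diff:
  assumes "alg_struct e" and "x \<in> subalg e S" and "y \<in> subalg e S"
  shows "x - y \<in> subalg e S"
proof -
  have "x + e (-1) * y \<in> subalg e S"
    using assms(2,3) by (intro subalg.add subalg.mult subalg.scal)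
  then show ?thesis
    using alg_struct_minus_one[OF assms(1)] by simp
qed

lemma subalg_comm:
  assumes "alg_struct e" and "x \<in> subalg e S" and "y \<in> subalg e S"
  shows "comm x y \<in> subalg e S"
  unfolding comm_def using assms by (intro subalg_diff subalg.mult)

lemma subalg_qcomm:
  assumes "alg_struct e" and "x \<in> subalg e S" and "y \<in> subalg e S"
  shows "qcomm e q x y \<in> subalg e S"
  unfolding qcomm_def using assms by (intro subalg_diff subalg.mult subalg.scal)

lemma not_root_of_unity_power_four:
  assumes "not_root_of_unity q"
  shows "q ^ 4 \<noteq> 1"
  using assms unfolding not_root_of_unity_def by simp

lemma not_root_of_unity_plus_inverse_neq_0:
  fixes q :: "'f::field"
  assumes "q \<noteq> 0" and "not_root_of_unity q"
  shows "q + inverse q \<noteq> 0"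
proof
  assume "q + inverse q = 0"
  then have "q * (q + inverse q) = 0" by simp
  then have "q ^ 2 = -1"
    using assms(1) by (simp add: distrib_left power2_eq_square eq_neg_iff_add_eq_0)
  then have "q ^ 4 = 1"
    using power_mult[of q 2 2] by simp
  with not_root_of_unity_power_four[OF assms(2)] show False by simp
qed

lemma not_root_of_unity_rho_neq_0:
  fixes q :: "'f::field"
  assumes "q \<noteq> 0" and "not_root_of_unity q"
  shows "rho q \<noteq> 0"
proof
  assume "rho q = 0"
  then have "q ^ 2 = inverse (q ^ 2)"
    unfolding rho_def by simp
  then have "q ^ 2 * q ^ 2 = 1"
    using assms(1) by (metis power_not_zero right_inverse)
  then have "q ^ 4 = 1"
    by (simp flip: power_add)
  with not_root_of_unity_power_four[OF assms(2)] show False by simp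
qed

lemma Oq_rels_Wm_Suc:
  assumes "alg_struct e" and "rho q \<noteq> 0" and "Oq_rels e q Wm Wp G Gt"
  shows "Wm (Suc k) = Wp k + e (inverse (rho q)) * qcomm e q (Gt k) (Wm 0)"
proof -
  have "qcomm e q (Gt k) (Wm 0) = e (rho q) * (Wm (Suc k) - Wp k)"
    using assms(3) unfolding Oq_rels_def by (simp add: right_diff_distrib)
  then show ?thesis
    using alg_struct_inverse_cancel[OF assms(1,2)] by simp
qed

lemma Oq_rels_Wp_Suc:
  assumes "alg_struct e" and "rho q \<noteq> 0" and "Oq_rels e q Wm Wp G Gt"
  shows "Wp (Suc k) = Wm k + e (inverse (rho q)) * qcomm e q (Wp 0) (Gt k)"
proof -
  have "qcomm e q (Wp 0) (Gt k) = e (rho q) * (Wp (Suc k) - Wm k)"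
    using assms(3) unfolding Oq_rels_def by (simp add: right_diff_distrib)
  then show ?thesis
    using alg_struct_inverse_cancel[OF assms(1,2)] by simp
qed

lemma Oq_rels_G:
  assumes "alg_struct e" and "q + inverse q \<noteq> 0" and "Oq_rels e q Wm Wp G Gt"
  shows "G k = Gt k - e (q + inverse q) * comm (Wm 0) (Wp k)"
proof -
  have "comm (Wm 0) (Wp k) = e (inverse (q + inverse q)) * (Gt k - G k)"
    using assms(3) unfolding Oq_rels_def by blast
  then have "e (q + inverse q) * comm (Wm 0) (Wp k) = Gt k - G k"
    using alg_struct_inverse_cancel[OF assms(1), of "inverse (q + inverse q)"] assms(2)
    by simp
  then show ?thesis by (simp add: algebra_simps)
qed

theorem lemma5p1:
  fixes e :: "'f::field \<Rightarrow> 'a::ring_1" and q :: 'f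
    and Wm Wp G Gt :: "nat \<Rightarrow> 'a"
  assumes "alg_struct e"
    and "q \<noteq> 0" and "not_root_of_unity q"
    and "Oq_rels e q Wm Wp G Gt"
  shows "\<forall>k. Wm k \<in> subalg e ({Wm 0, Wp 0} \<union> range Gt) \<and>
             Wp k \<in> subalg e ({Wm 0, Wp 0} \<union> range Gt) \<and>
             G k \<in> subalg e ({Wm 0, Wp 0} \<union> range Gt) \<and>
             Gt k \<in> subalg e ({Wm 0, Wp 0} \<union> range Gt)"
proof -
  define S where "S = subalg e ({Wm 0, Wp 0} \<union> range Gt)"
  have gens: "Wm 0 \<in> S" "Wp 0 \<in> S" "Gt k \<in> S" for k
    unfolding S_def by (auto intro: subalg.gen)
  have rho: "rho q \<noteq> 0" and plus_inverse: "q + inverse q \<noteq> 0"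
    using assms(2,3) by (rule not_root_of_unity_rho_neq_0 not_root_of_unity_plus_inverse_neq_0)+
  have W: "Wm k \<in> S \<and> Wp k \<in> S" for k
  proof (induction k)
    case 0
    show ?case using gens by simp
  next
    case (Suc k)
    then show ?case
      unfolding Oq_rels_Wm_Suc[OF assms(1) rho assms(4)] Oq_rels_Wp_Suc[OF assms(1) rho assms(4)]
      using gens unfolding S_def
      by (auto intro: subalg.add subalg.mult subalg.scal subalg_qcomm[OF assms(1)])
  qed
  have "G k \<in> S" for k
    unfolding Oq_rels_G[OF assms(1) plus_inverse assms(4)]
    using gens W unfolding S_def
    by (intro subalg_diff[OF assms(1)] subalg.mult subalg.scal subalg_comm[OF assms(1)]) auto
  then show ?thesis
    using W gens unfolding S_def by blast
qed

end
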